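(* Fix $k=1$ and $\epsilon$ with $0\le\epsilon\le1/2$, and assume $m^{\epsilon}\le\sqrt n$. Any deterministic coverage oracle that stores a datastructure of at most $b=nm^{1-2\epsilon}$ bits does not attain an approximation ratio of $O(m^{\epsilon-\delta})$ for any constant $\delta>0$.
   Context: A set system with $n$ items and $m$ sets is a pair $(\mathcal X,\mathcal I)$ with $\mathcal X=\{1,\dots,n\}$ and $\mathcal I$ an indexed family of $m$ subsets of $\mathcal X$. For $k\ge1$ and a query $Q\subseteq\mathcal X$, $OPT(k,\mathcal X,\mathcal I,Q)=\max\{|(\bigcup_{S\in\mathcal J}S)\cap Q| : \mathcal J\subseteq\mathcal I,|\mathcal J|\le k\}$. A deterministic coverage oracle consists of a deterministic static stage mapping $(n,m,k,(\mathcal X,\mathcal I))$ to a bit string $\mathcal D$ (the datastructure), and a deterministic dynamic stage mapping $(\mathcal D,Q)$, for $Q\subseteq\mathcal X$, to (indices of) $\mathcal J\subseteq\mathcal I$ with $|\mathcal J|\le k$, without access to $(\mathcal X,\mathcal I)$; $\mathcal A(k,\mathcal X,\mathcal I,Q)=|(\bigcup_{S\in\mathcal J}S)\cap Q|$. The approximation ratio is $\max OPT/\mathcal A$ over all set systems with $n$ items and $m$ sets and all queries $Q$. No computational restrictions are assumed. *)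

theory Defs
  imports Complex_Main "HOL-Library.Extended_Real"
begin

definition set_system :: "nat \<Rightarrow> nat \<Rightarrow> (nat \<Rightarrow> nat set) \<Rightarrow> bool" where
  "set_system n m I \<longleftrightarrow> (\<forall>i<m. I i \<subseteq> {1..n}) \<and> (\<forall>i\<ge>m. I i = {})"

definition OPT :: "nat \<Rightarrow> nat \<Rightarrow> (nat \<Rightarrow> nat set) \<Rightarrow> nat set \<Rightarrow> nat" where
  "OPT k m I Q = Max {card ((\<Union>i\<in>J. I i) \<inter> Q) | J. J \<subseteq> {..<m} \<and> card J \<le> k}"

(* A(k, X, I, Q) for an oracle given by a static stage and a dynamic stage;
   the dynamic stage only sees the datastructure D and the query Q. *)
definition alg_value ::
  "(nat \<Rightarrow> nat \<Rightarrow> nat \<Rightarrow> (nat \<Rightarrow> nat set) \<Rightarrow> bool list) \<Rightarrow> (bool list \<Rightarrow> nat set \<Rightarrow> nat set)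
    \<Rightarrow> nat \<Rightarrow> nat \<Rightarrow> nat \<Rightarrow> (nat \<Rightarrow> nat set) \<Rightarrow> nat set \<Rightarrow> nat" where
  "alg_value static dyn k n m I Q = card ((\<Union>i\<in>dyn (static n m k I) Q. I i) \<inter> Q)"

definition single_ratio :: "nat \<Rightarrow> nat \<Rightarrow> ereal" where
  "single_ratio opt a = (if a = 0 then (if opt = 0 then 1 else \<infinity>) else ereal (real opt / real a))"

definition approx_ratio ::
  "(nat \<Rightarrow> nat \<Rightarrow> nat \<Rightarrow> (nat \<Rightarrow> nat set) \<Rightarrow> bool list) \<Rightarrow> (bool list \<Rightarrow> nat set \<Rightarrow> nat set)
    \<Rightarrow> nat \<Rightarrow> nat \<Rightarrow> nat \<Rightarrow> ereal" where
  "approx_ratio static dyn k n m =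
     Sup {single_ratio (OPT k m I Q) (alg_value static dyn k n m I Q) | I Q.
            set_system n m I \<and> Q \<subseteq> {1..n}}"

end

theory Submission
  imports Defs "HOL-Computational_Algebra.Computational_Algebra" "HOL-Combinatorics.Permutations"
begin

(* Suppose the approximation ratio were at most C * m^(eps - delta) for all large m.
   If eps < delta, this bound tends to 0, while every ratio is at least 1 (empty query).
   If delta <= eps, take t = ceil (1/eps), a large prime q, n = q^2 and m = floor (q^(1/eps)).
   Graphs of m distinct polynomials of degree <= t over Z_q give m subsets of {1..n} of size q
   with pairwise overlaps <= t (Lagrange's root bound modulo q).  Permuting these sets yields
   m! set systems, but the datastructure has at most n * m^(1 - 2 eps) <= m + 1 bits, so two
   different permutations share a datastructure.  Querying a set on which they disagree, the
   single returned index misses the query in one of the two systems, so the ratio is at least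
   q/t, which exceeds C * m^(eps - delta) once q is large. *)

lemma int_dvd_diff_below_imp_eq:
  fixes q x a :: nat
  assumes "x < q" "a < q" "int q dvd int x - int a"
  shows "x = a"
  using assms by (metis mod_eq_dvd_iff of_nat_mod mod_less of_nat_eq_iff)

(* Dividing out a root a modulo a prime q keeps every other root x modulo q,
   because q does not divide x - a. *)
lemma root_mod_prime_of_synthetic_div:
  fixes d :: "int poly"
  assumes "prime q" "x < q" "a < q" "x \<noteq> a"
    and "int q dvd poly d (int a)" "int q dvd poly d (int x)"
  shows "int q dvd poly (synthetic_div d (int a)) (int x)"
proof -
  have "poly d (int x) = (int x - int a) * poly (synthetic_div d (int a)) (int x) + poly d (int a)"
    by (subst synthetic_div_correct'[of "int a" d, symmetric]) (simp add: algebra_simps)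
  then have "int q dvd (int x - int a) * poly (synthetic_div d (int a)) (int x)"
    using assms(5,6) by (metis dvd_add_left_iff)
  moreover have "\<not> int q dvd int x - int a"
    using int_dvd_diff_below_imp_eq assms(2-4) by blast
  moreover have "prime (int q)"
    using assms(1) by simp
  ultimately show ?thesis
    using prime_dvd_mult_iff by blast
qed

lemma many_roots_mod_prime_imp_divisible:
  fixes d :: "int poly"
  assumes "prime q" "degree d < card {x. x < q \<and> int q dvd poly d (int x)}"
  shows "\<exists>e. d = smult (int q) e"
  using assms(2)
proof (induction "degree d" arbitrary: d)
  case 0
  then obtain x where "int q dvd poly d (int x)"
    by (metis (no_types, lifting) Collect_empty_eq card.empty less_irrefl)
  moreover obtain c where c: "d = [:c:]"
    using "0.hyps" by (metis degree_0_id)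
  ultimately obtain k where "c = int q * k"
    by (auto simp: dvd_def)
  then have "d = smult (int q) [:k:]"
    by (simp add: c)
  then show ?case
    by blast
next
  case (Suc k d)
  define R where "R = {x. x < q \<and> int q dvd poly d (int x)}"
  have many_R: "degree d < card R"
    using Suc.prems unfolding R_def .
  then have "R \<noteq> {}"
    by auto
  then obtain a where a: "a \<in> R"
    by blast
  define g where "g = synthetic_div d (int a)"
  have deg_g: "k = degree g"
    using Suc.hyps(2) by (simp add: g_def degree_synthetic_div)
  have "R - {a} \<subseteq> {x. x < q \<and> int q dvd poly g (int x)}"
    using a root_mod_prime_of_synthetic_div[OF assms(1)] by (auto simp: R_def g_def)
  then have "card (R - {a}) \<le> card {x. x < q \<and> int q dvd poly g (int x)}"
    by (intro card_mono) auto
  moreover have "card (R - {a}) = card R - 1"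
    using a by (simp add: R_def)
  ultimately have "card R - 1 \<le> card {x. x < q \<and> int q dvd poly g (int x)}"
    by simp
  then have "degree g < card {x. x < q \<and> int q dvd poly g (int x)}"
    using many_R Suc.hyps(2) deg_g by linarith
  then obtain e where e: "g = smult (int q) e"
    using Suc.hyps(1)[OF deg_g] by blast
  from a obtain r where r: "poly d (int a) = int q * r"
    unfolding R_def by (auto simp: dvd_def)
  have "d = [:- int a, 1:] * g + [:poly d (int a):]"
    unfolding g_def by (rule synthetic_div_correct'[symmetric])
  also have "\<dots> = smult (int q) ([:- int a, 1:] * e + [:r:])"
    by (simp add: e r smult_add_right mult_smult_right)
  finally show ?case
    by blast
qed

definition poly_eval_mod :: "nat \<Rightarrow> nat \<Rightarrow> (nat \<Rightarrow> nat) \<Rightarrow> nat \<Rightarrow> nat" where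
  "poly_eval_mod q t a x = (\<Sum>i\<le>t. a i * x ^ i) mod q"

lemma poly_eval_mod_agreement:
  assumes "prime q" and coeffs: "\<forall>i\<le>t. a i < q \<and> b i < q" and differ: "\<exists>i\<le>t. a i \<noteq> b i"
  shows "card {x. x < q \<and> poly_eval_mod q t a x = poly_eval_mod q t b x} \<le> t"
proof (rule ccontr)
  assume many: "\<not> ?thesis"
  define d :: "int poly" where "d = (\<Sum>i\<le>t. monom (int (a i) - int (b i)) i)"
  have coeff_d: "coeff d i = (if i \<le> t then int (a i) - int (b i) else 0)" for i
    unfolding d_def by (simp add: coeff_sum coeff_monom)
  have "degree d \<le> t"
    by (rule degree_le) (simp add: coeff_d)
  have poly_d: "poly d (int x) = int (\<Sum>i\<le>t. a i * x ^ i) - int (\<Sum>i\<le>t. b i * x ^ i)" for x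
    unfolding d_def by (simp add: poly_sum poly_monom sum_subtractf left_diff_distrib)
  have "int q dvd poly d (int x)" if "poly_eval_mod q t a x = poly_eval_mod q t b x" for x
  proof -
    have "int (\<Sum>i\<le>t. a i * x ^ i) mod int q = int (\<Sum>i\<le>t. b i * x ^ i) mod int q"
      using that unfolding poly_eval_mod_def by (metis of_nat_mod)
    then show ?thesis
      unfolding poly_d by (metis mod_eq_dvd_iff)
  qed
  then have "{x. x < q \<and> poly_eval_mod q t a x = poly_eval_mod q t b x}
      \<subseteq> {x. x < q \<and> int q dvd poly d (int x)}"
    by blast
  then have "card {x. x < q \<and> poly_eval_mod q t a x = poly_eval_mod q t b x}
      \<le> card {x. x < q \<and> int q dvd poly d (int x)}"
    by (intro card_mono) auto
  then obtain e where e: "d = smult (int q) e"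
    using many_roots_mod_prime_imp_divisible[OF assms(1)] \<open>degree d \<le> t\<close> many by fastforce
  obtain i where i: "i \<le> t" "a i \<noteq> b i"
    using differ by blast
  have "int (a i) - int (b i) = int q * coeff e i"
    using coeff_d[of i] i(1) by (simp add: e)
  then have "int q dvd int (a i) - int (b i)"
    by (rule dvdI)
  then show False
    using int_dvd_diff_below_imp_eq coeffs i by blast
qed

(* The graph of f on {0..<q}, the point (x, y) being encoded as the item 1 + x + q * y. *)
definition graph_set :: "nat \<Rightarrow> (nat \<Rightarrow> nat) \<Rightarrow> nat set" where
  "graph_set q f = (\<lambda>x. 1 + x + q * f x) ` {..<q}"

lemma graph_point_eq_iff:
  fixes q x x' y y' :: nat
  assumes "x < q" "x' < q"
  shows "1 + x + q * y = 1 + x' + q * y' \<longleftrightarrow> x = x' \<and> y = y'"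
proof
  assume eq: "1 + x + q * y = 1 + x' + q * y'"
  then have "(x + q * y) mod q = (x' + q * y') mod q"
    by simp
  then have "x = x'"
    using assms by simp
  then show "x = x' \<and> y = y'"
    using eq assms by simp
qed simp

lemma card_graph_set: "card (graph_set q f) = q"
proof -
  have "inj_on (\<lambda>x. 1 + x + q * f x) {..<q}"
    by (intro inj_onI) (metis graph_point_eq_iff lessThan_iff)
  then show ?thesis
    unfolding graph_set_def by (simp add: card_image)
qed

lemma graph_set_subset:
  assumes "\<forall>x<q. f x < q"
  shows "graph_set q f \<subseteq> {1..q^2}"
proof
  fix z assume "z \<in> graph_set q f"
  then obtain x where x: "x < q" and z: "z = 1 + x + q * f x"
    unfolding graph_set_def by blast
  have "Suc (f x) \<le> q"
    using assms x by (simp add: Suc_le_eq)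
  then have "q * Suc (f x) \<le> q * q"
    by (rule mult_le_mono2)
  then show "z \<in> {1..q^2}"
    using x z by (simp add: power2_eq_square)
qed

lemma card_graph_set_inter:
  "card (graph_set q f \<inter> graph_set q g) \<le> card {x. x < q \<and> f x = g x}"
proof -
  have "graph_set q f \<inter> graph_set q g \<subseteq> (\<lambda>x. 1 + x + q * f x) ` {x. x < q \<and> f x = g x}"
  proof
    fix z assume "z \<in> graph_set q f \<inter> graph_set q g"
    then obtain x x' where x: "x < q" "z = 1 + x + q * f x" and x': "x' < q" "z = 1 + x' + q * g x'"
      unfolding graph_set_def by blast
    then have "x = x' \<and> f x = g x'"
      using graph_point_eq_iff by metis
    then show "z \<in> (\<lambda>x. 1 + x + q * f x) ` {x. x < q \<and> f x = g x}"
      using x by blast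
  qed
  then have "card (graph_set q f \<inter> graph_set q g) \<le> card ((\<lambda>x. 1 + x + q * f x) ` {x. x < q \<and> f x = g x})"
    by (intro card_mono) auto
  also have "\<dots> \<le> card {x. x < q \<and> f x = g x}"
    by (rule card_image_le) simp
  finally show ?thesis .
qed

lemma polynomial_set_packing:
  assumes "prime q" "m \<le> q ^ Suc t"
  obtains e :: "nat \<Rightarrow> nat set" where
    "\<And>c. c < m \<Longrightarrow> e c \<subseteq> {1..q^2}" "\<And>c. c < m \<Longrightarrow> card (e c) = q"
    "\<And>c c'. c < m \<Longrightarrow> c' < m \<Longrightarrow> c \<noteq> c' \<Longrightarrow> card (e c \<inter> e c') \<le> t"
proof -
  define Coeffs where "Coeffs = (\<Pi>\<^sub>E i\<in>{..t}. {..<q})"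
  have "finite Coeffs" "card Coeffs = q ^ Suc t"
    unfolding Coeffs_def by (simp_all add: finite_PiE card_PiE)
  then obtain code where code: "code ` {..<m} \<subseteq> Coeffs" "inj_on code {..<m}"
    using card_le_inj[of "{..<m}" Coeffs] assms(2) by auto
  have "0 < q"
    using assms(1) prime_gt_0_nat by blast
  show thesis
  proof (rule that)
    fix c assume "c < m"
    show "graph_set q (poly_eval_mod q t (code c)) \<subseteq> {1..q^2}"
      using \<open>0 < q\<close> by (intro graph_set_subset) (simp add: poly_eval_mod_def)
    show "card (graph_set q (poly_eval_mod q t (code c))) = q"
      by (rule card_graph_set)
  next
    fix c c' assume c: "c < m" "c' < m" "c \<noteq> c'"
    then have coeffs: "code c \<in> Coeffs" "code c' \<in> Coeffs" "code c \<noteq> code c'"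
      using code by (auto simp: inj_on_eq_iff)
    then have "\<exists>i\<le>t. code c i \<noteq> code c' i"
      unfolding Coeffs_def by (metis PiE_ext atMost_iff)
    moreover have "\<forall>i\<le>t. code c i < q \<and> code c' i < q"
      using coeffs unfolding Coeffs_def by auto
    ultimately have "card {x. x < q \<and> poly_eval_mod q t (code c) x = poly_eval_mod q t (code c') x} \<le> t"
      by (intro poly_eval_mod_agreement[OF assms(1)])
    then show "card (graph_set q (poly_eval_mod q t (code c)) \<inter> graph_set q (poly_eval_mod q t (code c'))) \<le> t"
      using card_graph_set_inter le_trans by blast
  qed
qed

lemma single_ratio_le_approx_ratio:
  assumes "set_system n m I" "Q \<subseteq> {1..n}"
  shows "single_ratio (OPT k m I Q) (alg_value static dyn k n m I Q) \<le> approx_ratio static dyn k n m"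
  unfolding approx_ratio_def by (rule Sup_upper) (use assms in blast)

(* The empty query has ratio 0/0 = 1, so no oracle beats ratio 1. *)
lemma approx_ratio_ge_one: "1 \<le> approx_ratio static dyn k n m"
proof -
  have "{card ((\<Union>i\<in>J. {}) \<inter> {}) | J. J \<subseteq> {..<m} \<and> card J \<le> k} = {0}"
    by (auto intro!: exI[of _ "{}"])
  then have "1 = single_ratio (OPT k m (\<lambda>_. {}) {}) (alg_value static dyn k n m (\<lambda>_. {}) {})"
    by (simp add: alg_value_def OPT_def single_ratio_def)
  also have "\<dots> \<le> approx_ratio static dyn k n m"
    by (rule single_ratio_le_approx_ratio) (simp_all add: set_system_def)
  finally show ?thesis .
qed

(* For k >= 1 a single set of the system is a feasible solution. *)
lemma card_inter_le_OPT:
  assumes "i < m" "1 \<le> k"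
  shows "card (I i \<inter> Q) \<le> OPT k m I Q"
proof -
  let ?values = "{card ((\<Union>i\<in>J. I i) \<inter> Q) | J. J \<subseteq> {..<m} \<and> card J \<le> k}"
  have "?values \<subseteq> (\<lambda>J. card ((\<Union>i\<in>J. I i) \<inter> Q)) ` Pow {..<m}"
    by blast
  then have "finite ?values"
    by (rule finite_subset) simp
  moreover have "card (I i \<inter> Q) \<in> ?values"
    using assms by (intro CollectI exI[of _ "{i}"]) auto
  ultimately show ?thesis
    unfolding OPT_def by (rule Max_ge)
qed

lemma single_ratio_ge:
  fixes s t opt a :: nat
  assumes "0 < t" "t < s" "s \<le> opt" "a \<le> t"
  shows "ereal (real s / real t) \<le> single_ratio opt a"
proof (cases "a = 0")
  case True
  then show ?thesis
    using assms by (simp add: single_ratio_def)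
next
  case False
  then have "real s / real t \<le> real opt / real a"
    using assms by (intro frac_le) auto
  then show ?thesis
    using False by (simp add: single_ratio_def)
qed

lemma approx_ratio_ge_gap:
  assumes "set_system n m I" "Q \<subseteq> {1..n}" "1 \<le> k"
    and "i < m" "s \<le> card (I i \<inter> Q)" "alg_value static dyn k n m I Q \<le> t" "0 < t" "t < s"
  shows "ereal (real s / real t) \<le> approx_ratio static dyn k n m"
proof -
  have "s \<le> OPT k m I Q"
    using assms(4,5,3) card_inter_le_OPT le_trans by blast
  then have "ereal (real s / real t) \<le> single_ratio (OPT k m I Q) (alg_value static dyn k n m I Q)"
    using assms(6-8) by (intro single_ratio_ge)
  also have "\<dots> \<le> approx_ratio static dyn k n m"
    using assms(1,2) by (rule single_ratio_le_approx_ratio)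
  finally show ?thesis .
qed

lemma card_union_at_most_one:
  assumes "finite J" "card J \<le> 1" "\<forall>j\<in>J. card (A j \<inter> Q) \<le> t"
  shows "card ((\<Union>j\<in>J. A j) \<inter> Q) \<le> t"
proof (cases "J = {}")
  case False
  then obtain j where "j \<in> J"
    by blast
  moreover have "\<forall>a\<in>J. \<forall>b\<in>J. a = b"
    using assms(2) card_le_Suc0_iff_eq[OF assms(1)] by simp
  ultimately have "J = {j}"
    by blast
  then show ?thesis
    using assms(3) by simp
qed simp

(* Pigeonhole for datastructures: there are fewer than 2^(L+1) bit strings of length <= L. *)
lemma bitstrings_collide:
  fixes F :: "'a \<Rightarrow> bool list"
  assumes "finite X" "2 ^ Suc L \<le> card X" "\<forall>x\<in>X. length (F x) \<le> L"
  obtains x y where "x \<in> X" "y \<in> X" "x \<noteq> y" "F x = F y"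
proof -
  let ?Short = "{xs :: bool list. set xs \<subseteq> UNIV \<and> length xs \<le> L}"
  have "card ?Short = (\<Sum>i\<le>L. 2 ^ i)"
    using card_lists_length_le[of "UNIV :: bool set" L] by simp
  also have "\<dots> < 2 ^ Suc L"
    by (induction L) auto
  finally have "card ?Short < card X"
    using assms(2) by linarith
  moreover have "card (F ` X) \<le> card ?Short"
    using assms(3) by (intro card_mono finite_lists_length_le) auto
  ultimately have "card (F ` X) < card X"
    by linarith
  then show thesis
    using pigeonhole that unfolding inj_on_def by blast
qed

(* Two permuted copies of
   the family share a datastructure; querying a set on which the permutations differ, the
   single returned index misses the query in one of the two systems. *)
lemma packing_lower_bound:
  fixes e :: "nat \<Rightarrow> nat set"
  assumes valid: "\<forall>I Q. set_system n m I \<and> Q \<subseteq> {1..n} \<longrightarrow>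
                    dyn (static n m 1 I) Q \<subseteq> {..<m} \<and> card (dyn (static n m 1 I) Q) \<le> 1"
    and sets: "\<And>c. c < m \<Longrightarrow> e c \<subseteq> {1..n}" "\<And>c. c < m \<Longrightarrow> card (e c) = s"
    and overlap: "\<And>c c'. c < m \<Longrightarrow> c' < m \<Longrightarrow> c \<noteq> c' \<Longrightarrow> card (e c \<inter> e c') \<le> t"
    and gap: "0 < t" "t < s"
    and short: "\<forall>I. set_system n m I \<longrightarrow> length (static n m 1 I) \<le> L"
    and many: "2 ^ Suc L \<le> (fact m :: nat)"
  shows "ereal (real s / real t) \<le> approx_ratio static dyn 1 n m"
proof -
  define sys where "sys p = (\<lambda>i. if i < m then e (p i) else {})" for p :: "nat \<Rightarrow> nat"
  have sys: "set_system n m (sys p)" if "p permutes {..<m}" for p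
    using sets(1) permutes_in_image[OF that] unfolding set_system_def sys_def by auto
  obtain p p' where perm: "p permutes {..<m}" "p' permutes {..<m}" and "p \<noteq> p'"
    and same: "static n m 1 (sys p) = static n m 1 (sys p')"
  proof (rule bitstrings_collide[of "{p. p permutes {..<m}}" L "\<lambda>p. static n m 1 (sys p)"])
    show "finite {p. p permutes {..<m}}"
      by (simp add: finite_permutations)
    show "2 ^ Suc L \<le> card {p. p permutes {..<m}}"
      using many by (simp add: card_permutations)
    show "\<forall>p\<in>{p. p permutes {..<m}}. length (static n m 1 (sys p)) \<le> L"
      using short sys by blast
  qed auto
  then obtain i where i: "i < m" "p i \<noteq> p' i"
    by (metis ext lessThan_iff permutes_not_in)
  have pi: "p i < m"
    using permutes_in_image[OF perm(1)] i(1) by simp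
  define Q where "Q = e (p i)"
  define J where "J = dyn (static n m 1 (sys p)) Q"
  have Q: "Q \<subseteq> {1..n}"
    using sets(1) pi unfolding Q_def by blast
  have J: "J \<subseteq> {..<m}" "card J \<le> 1"
    using valid sys[OF perm(1)] Q unfolding J_def by blast+
  then have "finite J"
    using finite_subset by blast
  obtain \<sigma> where \<sigma>: "\<sigma> permutes {..<m}" "dyn (static n m 1 (sys \<sigma>)) Q = J"
    "\<forall>j\<in>J. \<sigma> j \<noteq> p i"
  proof (cases "i \<in> J")
    case True
    then have "J = {i}"
      using J(2) card_le_Suc0_iff_eq[OF \<open>finite J\<close>] by auto
    then show thesis
      using that[OF perm(2)] same i(2) unfolding J_def by simp
  next
    case False
    then show thesis
      using that[OF perm(1)] permutes_inj[OF perm(1)] unfolding J_def by (metis injD)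
  qed
  have "alg_value static dyn 1 n m (sys \<sigma>) Q \<le> t"
    unfolding alg_value_def \<sigma>(2)
  proof (rule card_union_at_most_one[OF \<open>finite J\<close> J(2)], intro ballI)
    fix j assume "j \<in> J"
    then have "j < m" "\<sigma> j < m" "\<sigma> j \<noteq> p i"
      using J(1) \<sigma> permutes_in_image[OF \<sigma>(1)] by auto
    then show "card (sys \<sigma> j \<inter> Q) \<le> t"
      using overlap pi unfolding sys_def Q_def by simp
  qed
  moreover define i' where "i' = inv \<sigma> (p i)"
  have "i' < m" "sys \<sigma> i' = Q"
    using pi permutes_in_image[OF permutes_inv[OF \<sigma>(1)]] permutes_inverses(1)[OF \<sigma>(1)]
    unfolding i'_def sys_def Q_def by auto
  moreover have "card Q = s"
    using sets(2) pi unfolding Q_def by blast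
  ultimately show ?thesis
    using approx_ratio_ge_gap[OF sys[OF \<sigma>(1)] Q _ \<open>i' < m\<close> _ _ gap] by simp
qed

lemma fact_ge_two_power: "6 \<le> m \<Longrightarrow> 2 ^ (m + 2) \<le> (fact m :: nat)"
proof (induction m rule: nat_induct_at_least)
  case base
  then show ?case
    by (simp add: fact_numeral)
next
  case (Suc m)
  have "(2::nat) ^ (Suc m + 2) = 2 * 2 ^ (m + 2)"
    by simp
  also have "\<dots> \<le> Suc m * fact m"
    using Suc.IH Suc.hyps by (intro mult_le_mono) auto
  also have "\<dots> = fact (Suc m)"
    by simp
  finally show ?case .
qed

(* The counting bound for the polynomial packing with n = q^2 and an (m+1)-bit datastructure;
   m <= q^t leaves room for distinct polynomials of degree at most t. *)
lemma polynomial_packing_lower_bound: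
  assumes valid: "\<forall>I Q. set_system (q^2) m I \<and> Q \<subseteq> {1..q^2} \<longrightarrow>
                    dyn (static (q^2) m 1 I) Q \<subseteq> {..<m} \<and> card (dyn (static (q^2) m 1 I) Q) \<le> 1"
    and "prime q" "m \<le> q ^ t" "0 < t" "t < q" "6 \<le> m"
    and short: "\<forall>I. set_system (q^2) m I \<longrightarrow> length (static (q^2) m 1 I) \<le> m + 1"
  shows "ereal (real q / real t) \<le> approx_ratio static dyn 1 (q^2) m"
proof -
  have power_le: "q ^ t \<le> q ^ Suc t"
    using prime_gt_0_nat[OF assms(2)] by (intro power_increasing) auto
  obtain e where e: "\<And>c. c < m \<Longrightarrow> e c \<subseteq> {1..q^2}" "\<And>c. c < m \<Longrightarrow> card (e c) = q"
    "\<And>c c'. c < m \<Longrightarrow> c' < m \<Longrightarrow> c \<noteq> c' \<Longrightarrow> card (e c \<inter> e c') \<le> t"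
    using polynomial_set_packing[OF assms(2) le_trans[OF assms(3) power_le]] by blast
  moreover have "2 ^ Suc (m + 1) \<le> (fact m :: nat)"
    using fact_ge_two_power[OF assms(6)] by simp
  ultimately show ?thesis
    by (rule packing_lower_bound[of "q^2" m dyn static e q t "m + 1",
          OF valid _ _ _ assms(4,5) short])
qed

lemma root_scale_bounds:
  fixes q t :: nat and \<epsilon> :: real
  assumes "1 \<le> q" "0 < \<epsilon>" "\<epsilon> \<le> 1" "1 / \<epsilon> \<le> real t"
  defines "m \<equiv> nat \<lfloor>real q powr (1 / \<epsilon>)\<rfloor>"
  shows "real m powr \<epsilon> \<le> real q" "real q < (real m + 1) powr \<epsilon>" "q \<le> m" "m \<le> q ^ t"
proof -
  have q_root: "(real q powr (1 / \<epsilon>)) powr \<epsilon> = real q"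
    using assms(2) by (simp add: powr_powr)
  have m_le: "real m \<le> real q powr (1 / \<epsilon>)"
    unfolding m_def by simp
  then have "real m powr \<epsilon> \<le> (real q powr (1 / \<epsilon>)) powr \<epsilon>"
    using assms(2) by (intro powr_mono2) auto
  then show "real m powr \<epsilon> \<le> real q"
    using q_root by simp
  have "real q powr (1 / \<epsilon>) < real m + 1"
    unfolding m_def by linarith
  then have "(real q powr (1 / \<epsilon>)) powr \<epsilon> < (real m + 1) powr \<epsilon>"
    using assms(2) by (intro powr_less_mono2) auto
  then show "real q < (real m + 1) powr \<epsilon>"
    using q_root by simp
  have "real q powr 1 \<le> real q powr (1 / \<epsilon>)"
    using assms(1-3) by (intro powr_mono) auto
  then show "q \<le> m"
    unfolding m_def using assms(1) by (intro le_nat_floor) simp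
  have "real q powr (1 / \<epsilon>) \<le> real q powr real t"
    using assms(1,4) by (intro powr_mono) auto
  moreover have "real q powr real t = real q ^ t"
    using assms(1) by (simp add: powr_realpow)
  ultimately have "real m \<le> real q ^ t"
    using m_le by linarith
  then show "m \<le> q ^ t"
    by (metis of_nat_le_iff of_nat_power)
qed

lemma square_times_powr_le:
  fixes x y \<epsilon> :: real
  assumes "0 \<le> \<epsilon>" "\<epsilon> \<le> 1/2" "0 \<le> x" "0 \<le> y" "x \<le> (y + 1) powr \<epsilon>"
  shows "x^2 * y powr (1 - 2 * \<epsilon>) \<le> y + 1"
proof -
  have "x^2 \<le> ((y + 1) powr \<epsilon>)^2"
    using assms(5,3) by (rule power_mono)
  also have "\<dots> = (y + 1) powr (2 * \<epsilon>)"
    by (simp add: power2_eq_square powr_add[symmetric])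
  finally have "x^2 * y powr (1 - 2 * \<epsilon>) \<le> (y + 1) powr (2 * \<epsilon>) * (y + 1) powr (1 - 2 * \<epsilon>)"
    using assms by (intro mult_mono powr_mono2) auto
  also have "\<dots> = y + 1"
    using assms(4) by (simp add: powr_add[symmetric])
  finally show ?thesis .
qed

lemma powr_gap_lt:
  fixes x y t C \<epsilon> \<delta> :: real
  assumes "0 < \<delta>" "\<delta> \<le> \<epsilon>" "0 \<le> y" "y powr \<epsilon> \<le> x" "0 < t"
    and big: "(\<bar>C\<bar> * t + 1) powr (\<epsilon> / \<delta>) < x"
  shows "C * y powr (\<epsilon> - \<delta>) < x / t"
proof -
  have "0 < x"
    using big by (smt (verit) powr_ge_zero)
  have "\<bar>C\<bar> * t + 1 = ((\<bar>C\<bar> * t + 1) powr (\<epsilon> / \<delta>)) powr (\<delta> / \<epsilon>)"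
    using assms(1,2,5) by (simp add: powr_powr)
  also have "\<dots> < x powr (\<delta> / \<epsilon>)"
    using big assms(1,2) by (intro powr_less_mono2) auto
  finally have Ct: "\<bar>C\<bar> * t < x powr (\<delta> / \<epsilon>)"
    by simp
  have "y powr (\<epsilon> - \<delta>) = (y powr \<epsilon>) powr ((\<epsilon> - \<delta>) / \<epsilon>)"
    using assms(1,2) by (simp add: powr_powr)
  also have "\<dots> \<le> x powr ((\<epsilon> - \<delta>) / \<epsilon>)"
    using assms(1-4) by (intro powr_mono2) auto
  also have "\<dots> = x / x powr (\<delta> / \<epsilon>)"
    using \<open>0 < x\<close> assms(1,2) by (simp add: diff_divide_distrib powr_diff)
  finally have "\<bar>C\<bar> * y powr (\<epsilon> - \<delta>) \<le> \<bar>C\<bar> * (x / x powr (\<delta> / \<epsilon>))"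
    by (intro mult_left_mono) auto
  also have "\<dots> < x / t"
    using Ct \<open>0 < x\<close> assms(5) by (simp add: field_simps)
  finally show ?thesis
    by (smt (verit) abs_ge_self mult_right_mono powr_ge_zero)
qed

lemma datastructure_at_most_m_plus_one:
  fixes \<epsilon> :: real and q m :: nat
  assumes "0 \<le> \<epsilon>" "\<epsilon> \<le> 1/2" "1 \<le> q" "1 \<le> m"
    and "real m powr \<epsilon> \<le> real q" "real q < (real m + 1) powr \<epsilon>"
    and space: "\<forall>n m I. 1 \<le> n \<and> 1 \<le> m \<and> real m powr \<epsilon> \<le> sqrt (real n) \<and> set_system n m I \<longrightarrow>
                  real (length (static n m 1 I)) \<le> real n * real m powr (1 - 2 * \<epsilon>)"
    and "set_system (q^2) m I"
  shows "length (static (q^2) m 1 I) \<le> m + 1"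
proof -
  have "1 \<le> q^2" "real m powr \<epsilon> \<le> sqrt (real (q^2))"
    using assms(3,5) by auto
  then have "real (length (static (q^2) m 1 I)) \<le> real (q^2) * real m powr (1 - 2 * \<epsilon>)"
    using space assms(4,8) by blast
  also have "\<dots> = real q ^ 2 * real m powr (1 - 2 * \<epsilon>)"
    by simp
  also have "\<dots> \<le> real m + 1"
    using assms(1,2,6) by (intro square_times_powr_le) auto
  finally show ?thesis
    by linarith
qed

(* Case eps < delta: the claimed bound tends to 0, below the trivial ratio 1. *)
lemma no_decaying_bound:
  fixes \<epsilon> \<delta> C :: real and M :: nat
  assumes "\<epsilon> < \<delta>" "\<epsilon> \<le> 1/2"
  shows "\<not> (\<forall>n m. 1 \<le> n \<and> M \<le> m \<and> real m powr \<epsilon> \<le> sqrt (real n) \<longrightarrow>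
              approx_ratio static dyn 1 n m \<le> ereal (C * real m powr (\<epsilon> - \<delta>)))"
proof
  assume bound: "\<forall>n m. 1 \<le> n \<and> M \<le> m \<and> real m powr \<epsilon> \<le> sqrt (real n) \<longrightarrow>
                   approx_ratio static dyn 1 n m \<le> ereal (C * real m powr (\<epsilon> - \<delta>))"
  have "((\<lambda>m. C * real m powr (\<epsilon> - \<delta>)) \<longlongrightarrow> 0) sequentially"
    using assms(1) by (intro tendsto_mult_right_zero tendsto_neg_powr filterlim_real_sequentially) simp
  then have "eventually (\<lambda>m. C * real m powr (\<epsilon> - \<delta>) < 1) sequentially"
    by (rule order_tendstoD) simp
  then obtain N where N: "\<And>m. N \<le> m \<Longrightarrow> C * real m powr (\<epsilon> - \<delta>) < 1"
    unfolding eventually_sequentially by blast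
  define m where "m = max (max M N) 1"
  have "real m powr \<epsilon> \<le> real m powr (1/2)"
    using assms(2) by (intro powr_mono) (auto simp: m_def)
  then have "real m powr \<epsilon> \<le> sqrt (real m)"
    by (simp add: powr_half_sqrt)
  then have "approx_ratio static dyn 1 m m \<le> ereal (C * real m powr (\<epsilon> - \<delta>))"
    using bound by (auto simp: m_def)
  then have "1 \<le> ereal (C * real m powr (\<epsilon> - \<delta>))"
    using approx_ratio_ge_one order_trans by blast
  moreover have "C * real m powr (\<epsilon> - \<delta>) < 1"
    using N by (simp add: m_def)
  ultimately show False
    by simp
qed

(* Case delta <= eps: the polynomial packing for a large prime q contradicts the bound. *)
lemma no_sublinear_bound:
  fixes \<epsilon> \<delta> C :: real and M :: nat
  assumes "0 < \<delta>" "\<delta> \<le> \<epsilon>" "\<epsilon> \<le> 1/2"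
    and valid: "\<forall>n m I Q. set_system n m I \<and> Q \<subseteq> {1..n} \<longrightarrow>
                  dyn (static n m 1 I) Q \<subseteq> {..<m} \<and> card (dyn (static n m 1 I) Q) \<le> 1"
    and space: "\<forall>n m I. 1 \<le> n \<and> 1 \<le> m \<and> real m powr \<epsilon> \<le> sqrt (real n) \<and> set_system n m I \<longrightarrow>
                  real (length (static n m 1 I)) \<le> real n * real m powr (1 - 2 * \<epsilon>)"
  shows "\<not> (\<forall>n m. 1 \<le> n \<and> M \<le> m \<and> real m powr \<epsilon> \<le> sqrt (real n) \<longrightarrow>
              approx_ratio static dyn 1 n m \<le> ereal (C * real m powr (\<epsilon> - \<delta>)))"
proof
  assume bound: "\<forall>n m. 1 \<le> n \<and> M \<le> m \<and> real m powr \<epsilon> \<le> sqrt (real n) \<longrightarrow>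
                   approx_ratio static dyn 1 n m \<le> ereal (C * real m powr (\<epsilon> - \<delta>))"
  have "0 < \<epsilon>"
    using assms(1,2) by linarith
  define t where "t = nat \<lceil>1 / \<epsilon>\<rceil>"
  have "2 \<le> 1 / \<epsilon>"
    using \<open>0 < \<epsilon>\<close> assms(3) by (simp add: field_simps)
  then have t: "1 / \<epsilon> \<le> real t" "2 \<le> t"
    unfolding t_def by linarith+
  (* a prime q above K gives t < q <= m, M <= m, 6 <= m, and q/t beyond the claimed bound *)
  define K where "K = max (real M + real t + 6) ((\<bar>C\<bar> * real t + 1) powr (\<epsilon> / \<delta>))"
  obtain q where "prime q" "nat \<lceil>K\<rceil> < q"
    using bigger_prime by blast
  then have q: "real M + real t + 6 < real q" "(\<bar>C\<bar> * real t + 1) powr (\<epsilon> / \<delta>) < real q"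
    unfolding K_def by linarith+
  define m where "m = nat \<lfloor>real q powr (1 / \<epsilon>)\<rfloor>"
  have m: "real m powr \<epsilon> \<le> real q" "real q < (real m + 1) powr \<epsilon>" "q \<le> m" "m \<le> q ^ t"
    using root_scale_bounds[of q \<epsilon> t] q(1) \<open>0 < \<epsilon>\<close> assms(3) t(1) unfolding m_def by auto
  have sqrt_n: "real m powr \<epsilon> \<le> sqrt (real (q^2))"
    using m(1) by simp
  have short: "\<forall>I. set_system (q^2) m I \<longrightarrow> length (static (q^2) m 1 I) \<le> m + 1"
    using datastructure_at_most_m_plus_one[where static = static, OF _ assms(3) _ _ m(1,2) space]
      \<open>0 < \<epsilon>\<close> q(1) m(3)
    by auto
  have "ereal (real q / real t) \<le> approx_ratio static dyn 1 (q^2) m"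
    using polynomial_packing_lower_bound[where static = static and dyn = dyn, OF _ \<open>prime q\<close> m(4)
        _ _ _ short] valid q(1) m(3) t(2) by auto
  also have "\<dots> \<le> ereal (C * real m powr (\<epsilon> - \<delta>))"
    using bound sqrt_n q(1) m(3) by auto
  finally have "real q / real t \<le> C * real m powr (\<epsilon> - \<delta>)"
    by simp
  moreover have "C * real m powr (\<epsilon> - \<delta>) < real q / real t"
    using assms(1,2) m(1) q(2) t(2) by (intro powr_gap_lt) auto
  ultimately show False
    by linarith
qed

theorem mainTheorem7:
  fixes \<epsilon> \<delta> :: real
    and static :: "nat \<Rightarrow> nat \<Rightarrow> nat \<Rightarrow> (nat \<Rightarrow> nat set) \<Rightarrow> bool list"
    and dyn :: "bool list \<Rightarrow> nat set \<Rightarrow> nat set"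
  assumes eps0: "0 \<le> \<epsilon>" and eps1: "\<epsilon> \<le> 1/2"
    and valid: "\<forall>n m I Q. set_system n m I \<and> Q \<subseteq> {1..n} \<longrightarrow>
                  dyn (static n m 1 I) Q \<subseteq> {..<m} \<and> card (dyn (static n m 1 I) Q) \<le> 1"
    and space: "\<forall>n m I. 1 \<le> n \<and> 1 \<le> m \<and> real m powr \<epsilon> \<le> sqrt (real n) \<and> set_system n m I \<longrightarrow>
                  real (length (static n m 1 I)) \<le> real n * real m powr (1 - 2 * \<epsilon>)"
    and delta: "\<delta> > 0"
  shows "\<not> (\<exists>C M. \<forall>n m. 1 \<le> n \<and> M \<le> m \<and> real m powr \<epsilon> \<le> sqrt (real n) \<longrightarrow>
                 approx_ratio static dyn 1 n m \<le> ereal (C * real m powr (\<epsilon> - \<delta>)))"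
proof
  assume "\<exists>C M. \<forall>n m. 1 \<le> n \<and> M \<le> m \<and> real m powr \<epsilon> \<le> sqrt (real n) \<longrightarrow>
                 approx_ratio static dyn 1 n m \<le> ereal (C * real m powr (\<epsilon> - \<delta>))"
  then obtain C M where bound: "\<forall>n m. 1 \<le> n \<and> M \<le> m \<and> real m powr \<epsilon> \<le> sqrt (real n) \<longrightarrow>
                 approx_ratio static dyn 1 n m \<le> ereal (C * real m powr (\<epsilon> - \<delta>))"
    by blast
  show False
  proof (cases "\<epsilon> < \<delta>")
    case True
    then show False
      using no_decaying_bound[OF True eps1] bound by blast
  next
    case False
    then have "\<delta> \<le> \<epsilon>"
      by simp
    then show False
      using no_sublinear_bound[where static = static and dyn = dyn, OF delta _ eps1 valid space] bound
      by blast
  qed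
qed

end
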